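(* For integers $1\le r\le n$, \[ B_q(n,r)=\frac{[2n-1]!_q\,[2r]_q}{[n+r]!_q\,[n-r]!_q} = \sum_{\pi \in \mathcal{B}(n,r)} q^{\operatorname{maj}(\pi) - \operatorname{des}(\pi)}, \] and also $B_q(n,r)=q^{-(n-r)}\left(\left[{2n-1\atop n+r-1}\right]_q-\left[{2n-1\atop n+r}\right]_q\right)$.
   Context: Let $[r]_q=1+q+\cdots+q^{r-1}$, $[n]!_q=\prod_{r=1}^n[r]_q$, and $\left[{a\atop b}\right]_q$ be the Gaussian binomial coefficient. Paths use up steps $(1,1)$ and down steps $(1,-1)$ and are written as 0-1 sequences $\pi=\pi_1\cdots\pi_\ell$, with $0$ for up and $1$ for down. The descent set is $D(\pi)=\{i:\pi_i>\pi_{i+1}\}$, $\operatorname{maj}(\pi)=\sum_{i\in D(\pi)}i$, and $\operatorname{des}(\pi)=|D(\pi)|$. $\mathcal{B}(n,r)$ is the set of paths of length $2n$ that start at the origin with an up step, end at $(2n,-2r+2)$, and never go below the line $y=-2r+2$. In particular $\mathcal{B}(n,1)$ is the set of Catalan (Dyck) paths of length $2n$. *)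

theory Defs
  imports Main
begin

definition qint :: "nat \<Rightarrow> 'a::field \<Rightarrow> 'a" where
  "qint r q = (\<Sum>i<r. q ^ i)"

definition qfact :: "nat \<Rightarrow> 'a::field \<Rightarrow> 'a" where
  "qfact n q = (\<Prod>r=1..n. qint r q)"

fun gbin :: "nat \<Rightarrow> nat \<Rightarrow> 'a::field \<Rightarrow> 'a" where
  "gbin a 0 q = 1"
| "gbin 0 (Suc b) q = 0"
| "gbin (Suc a) (Suc b) q = gbin a b q + q ^ Suc b * gbin a (Suc b) q"

definition Bq :: "nat \<Rightarrow> nat \<Rightarrow> 'a::field \<Rightarrow> 'a" where
  "Bq n r q = qfact (2*n - 1) q * qint (2*r) q / (qfact (n+r) q * qfact (n-r) q)"

(* Paths as lists of steps: False = up step (0), True = down step (1). *)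
definition height :: "bool list \<Rightarrow> int" where
  "height p = int (length (filter Not p)) - int (length (filter id p))"

definition Bpaths :: "nat \<Rightarrow> nat \<Rightarrow> bool list set" where
  "Bpaths n r = {p. length p = 2*n \<and> p \<noteq> [] \<and> hd p = False
      \<and> height p = 2 - 2 * int r
      \<and> (\<forall>k\<le>length p. height (take k p) \<ge> 2 - 2 * int r)}"

(* descent set with 1-based positions: i with pi_i > pi_(i+1), i.e. pi_i = 1, pi_(i+1) = 0 *)
definition descents :: "bool list \<Rightarrow> nat set" where
  "descents p = {i. 1 \<le> i \<and> i < length p \<and> p ! (i - 1) \<and> \<not> p ! i}"

definition maj :: "bool list \<Rightarrow> nat" where
  "maj p = \<Sum>(descents p)"

definition des :: "bool list \<Rightarrow> nat" where
  "des p = card (descents p)"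

end

theory Submission
  imports Defs
begin

text \<open>
  Dropping the forced initial up step identifies \<open>\<B>(n,r)\<close> with the words having \<open>n - r\<close> up
  and \<open>n + r - 1\<close> down steps whose heights stay \<open>\<ge> -(2r - 1)\<close>, and turns \<open>maj - des\<close> into \<open>maj\<close>.
  Let \<open>S\<^sub>d(a,b)\<close> be the \<open>maj\<close> generating function of words with \<open>a\<close> up and \<open>b\<close> down steps
  staying \<open>\<ge> -d\<close>. Classifying words by their last step, and a final up step by whether it
  creates a descent, gives
  \<open>S(a+1,b+1) = S(a,b+1) + S(a+1,b) + (q\<^bsup>a+b+1\<^esup> - 1) S(a,b)\<close>,
  the last term being absent on the boundary \<open>b = a + d\<close>.
  The Gaussian binomial \<open>[a+b, a]\<close> and its reflection \<open>[a+b, b-d-1]\<close> satisfy the same recurrence,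
  which yields the q-reflection principle \<open>S\<^sub>d(a,b) = [a+b, a] - q\<^bsup>d+1\<^esup> [a+b, b-d-1]\<close>.
  Both closed forms then follow from the q-factorial expression of Gaussian binomials and
  \<open>[n+r] = [2r] + q\<^bsup>2r\<^esup>[n-r] = [n-r] + q\<^bsup>n-r\<^esup>[2r]\<close>.
\<close>

section \<open>Gaussian binomials\<close>

definition qbin :: "nat \<Rightarrow> nat \<Rightarrow> 'a::field \<Rightarrow> 'a" where
  "qbin a b q = gbin (a + b) a q"

lemma gbin_eq_0: "m < k \<Longrightarrow> gbin m k q = 0"
proof (induction m arbitrary: k)
  case 0 then show ?case by (cases k) auto
next
  case (Suc m) then show ?case by (cases k) auto
qed

lemma gbin_diag [simp]: "gbin m m q = 1"
  by (induction m) (auto simp: gbin_eq_0)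

lemma qbin_0_left [simp]: "qbin 0 b q = 1"
  by (simp add: qbin_def)

lemma qbin_0_right [simp]: "qbin a 0 q = 1"
  by (simp add: qbin_def)

lemma qbin_Suc_Suc: "qbin (Suc a) (Suc b) q = qbin a (Suc b) q + q ^ Suc a * qbin (Suc a) b q"
  by (simp add: qbin_def)

lemma qbin_Suc_Suc_dual: "qbin (Suc a) (Suc b) q = q ^ Suc b * qbin a (Suc b) q + qbin (Suc a) b q"
proof (induction "a + b" arbitrary: a b rule: less_induct)
  case less
  show ?case
  proof (cases a)
    case 0
    then show ?thesis
    proof (cases b)
      case (Suc b')
      then show ?thesis using \<open>a = 0\<close> less[of 0 b'] qbin_Suc_Suc[of 0 b q] qbin_Suc_Suc[of 0 b' q]
        by (simp add: algebra_simps)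
    qed (simp add: qbin_Suc_Suc)
  next
    case (Suc a')
    then show ?thesis
    proof (cases b)
      case 0
      have "q * qbin a' 1 q = qbin a 1 q - 1"
        using less[of a' 0] \<open>a = Suc a'\<close> by simp
      moreover have "q ^ a = qbin a 1 q - qbin a' 1 q"
        using qbin_Suc_Suc[of a' 0 q] \<open>a = Suc a'\<close> by simp
      ultimately have "q ^ Suc a = q * qbin a 1 q - qbin a 1 q + 1"
        by (simp add: right_diff_distrib)
      then show ?thesis using qbin_Suc_Suc[of a 0 q] 0 by (simp add: algebra_simps)
    next
      case (Suc b')
      then show ?thesis using \<open>a = Suc a'\<close> less[of a' b] less[of a b']
          qbin_Suc_Suc[of a b q] qbin_Suc_Suc[of a' b q] qbin_Suc_Suc[of a b' q]
        by (simp add: algebra_simps)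
    qed
  qed
qed

lemma qbin_commute: "qbin a b q = qbin b a q"
proof (induction "a + b" arbitrary: a b rule: less_induct)
  case less
  show ?case
  proof (cases a)
    case (Suc a')
    show ?thesis
    proof (cases b)
      case (Suc b')
      have "qbin a b q = qbin a' b q + q ^ a * qbin a b' q"
        using Suc \<open>a = Suc a'\<close> qbin_Suc_Suc by simp
      also have "\<dots> = qbin b a' q + q ^ a * qbin b' a q"
        using less[of a' b] less[of a b'] Suc \<open>a = Suc a'\<close> by simp
      also have "\<dots> = qbin b a q"
        using Suc \<open>a = Suc a'\<close> qbin_Suc_Suc_dual[of b' a' q] by simp
      finally show ?thesis .
    qed simp
  qed simp
qed

lemma qbin_Suc_Suc_second_difference:
  "qbin (Suc a) (Suc b) q - qbin (Suc a) b q - qbin a (Suc b) q = (q ^ (Suc a + b) - 1) * qbin a b q"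
proof -
  have "qbin (Suc a) (Suc b) q - qbin (Suc a) b q - qbin a (Suc b) q = (q ^ Suc b - 1) * qbin a (Suc b) q"
    using qbin_Suc_Suc_dual[of a b q] by (simp add: algebra_simps)
  also have "\<dots> = (q ^ (Suc a + b) - 1) * qbin a b q"
  proof (cases a)
    case (Suc a')
    have "q ^ Suc b * qbin a (Suc b) q = q ^ Suc b * qbin a' (Suc b) q + q ^ (Suc a + b) * qbin a b q"
      using qbin_Suc_Suc[of a' b q] Suc by (simp add: algebra_simps power_add)
    moreover have "qbin a (Suc b) q = q ^ Suc b * qbin a' (Suc b) q + qbin a b q"
      using qbin_Suc_Suc_dual[of a' b q] Suc by simp
    ultimately show ?thesis by (simp add: algebra_simps)
  qed simp
  finally show ?thesis .
qed

lemma qint_add: "qint (a + b) q = qint a q + q ^ a * qint b q"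
  by (induction b) (auto simp: qint_def power_add algebra_simps)

lemma qfact_Suc: "qfact (Suc m) q = qfact m q * qint (Suc m) q"
  by (simp add: qfact_def)

lemma qbin_mult_qfact: "qbin a b q * qfact a q * qfact b q = qfact (a + b) q"
proof (induction "a + b" arbitrary: a b rule: less_induct)
  case less
  show ?case
  proof (cases a)
    case (Suc a')
    show ?thesis
    proof (cases b)
      case (Suc b')
      have "qbin a b q * qfact a q * qfact b q
          = (qbin a' b q * qfact a' q * qfact b q) * qint a q
            + q ^ a * (qbin a b' q * qfact a q * qfact b' q) * qint b q"
        using Suc \<open>a = Suc a'\<close> by (simp add: qbin_Suc_Suc qfact_Suc algebra_simps)
      also have "\<dots> = qfact (a + b') q * (qint a q + q ^ a * qint b q)"
        using less[of a' b] less[of a b'] Suc \<open>a = Suc a'\<close> by (simp add: algebra_simps)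
      also have "\<dots> = qfact (a + b) q"
        using Suc by (simp add: qint_add[symmetric] qfact_Suc)
      finally show ?thesis .
    qed (simp add: qfact_def)
  qed (simp add: qfact_def)
qed

lemma qbin_sub_qbin_qfact:
  assumes "qfact (Suc a) q \<noteq> 0" and "qfact (Suc b) q \<noteq> 0"
  shows "qbin (Suc a) b q - q ^ k * qbin a (Suc b) q
       = qfact (Suc (a + b)) q * (qint (Suc b) q - q ^ k * qint (Suc a) q) / (qfact (Suc a) q * qfact (Suc b) q)"
proof -
  have "qfact a q \<noteq> 0" "qfact b q \<noteq> 0"
    using assms by (auto simp: qfact_Suc)
  then have qbin_eqs: "qbin (Suc a) b q = qfact (Suc (a + b)) q / (qfact (Suc a) q * qfact b q)"
    "qbin a (Suc b) q = qfact (Suc (a + b)) q / (qfact a q * qfact (Suc b) q)"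
    using assms qbin_mult_qfact[of "Suc a" b q] qbin_mult_qfact[of a "Suc b" q]
    by (simp_all add: field_simps)
  show ?thesis
    unfolding qbin_eqs using assms \<open>qfact a q \<noteq> 0\<close> \<open>qfact b q \<noteq> 0\<close>
    by (simp add: qfact_Suc field_simps)
qed

text \<open>The q-analogue of the reflection principle's count of words dipping below \<open>-d\<close>: reflecting
  at height \<open>-(d+1)\<close> turns \<open>a\<close> up and \<open>b\<close> down steps into \<open>a + d + 1\<close> up and \<open>b - d - 1\<close> down steps.\<close>

definition qbin_reflected :: "nat \<Rightarrow> nat \<Rightarrow> nat \<Rightarrow> 'a::field \<Rightarrow> 'a" where
  "qbin_reflected d a b q = (if d < b then qbin (b - d - 1) (a + d + 1) q else 0)"

lemma qbin_reflected_second_difference: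
  "qbin_reflected d (Suc a) (Suc b) q - qbin_reflected d (Suc a) b q - qbin_reflected d a (Suc b) q
     = (q ^ (Suc a + b) - 1) * qbin_reflected d a b q"
proof (cases "d < b")
  case True
  then obtain c where "b = d + 1 + c"
    by (metis Suc_eq_plus1 add_Suc less_iff_Suc_add)
  then show ?thesis
    using qbin_Suc_Suc_second_difference[of c "a + d + 1" q]
    by (simp add: qbin_reflected_def Suc_diff_le algebra_simps)
qed (auto simp: qbin_reflected_def)

lemma qbin_sub_reflected_boundary:
  assumes "b = a + d"
  shows "qbin (Suc a) (Suc b) q - q ^ (d + 1) * qbin_reflected d (Suc a) (Suc b) q
       = qbin (Suc a) b q - q ^ (d + 1) * qbin_reflected d (Suc a) b q"
proof -
  have "qbin_reflected d (Suc a) (Suc b) q - qbin_reflected d (Suc a) b q = q ^ a * qbin a (Suc b) q"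
  proof (cases a)
    case (Suc a')
    then show ?thesis
      using assms qbin_Suc_Suc[of a' "Suc b" q] by (simp add: qbin_reflected_def)
  qed (simp add: assms qbin_reflected_def)
  moreover have "q ^ (d + 1) * q ^ a = q ^ Suc b"
    using assms by (simp add: power_add[symmetric] add.commute)
  ultimately show ?thesis
    using qbin_Suc_Suc_dual[of a b q] by (simp add: algebra_simps) (metis mult.assoc)
qed

section \<open>Words staying above a horizontal line\<close>

definition ups :: "bool list \<Rightarrow> nat" where
  "ups w = length (filter Not w)"

definition downs :: "bool list \<Rightarrow> nat" where
  "downs w = length (filter id w)"

definition stays_above :: "int \<Rightarrow> bool list \<Rightarrow> bool" where
  "stays_above L w \<longleftrightarrow> (\<forall>k\<le>length w. L \<le> height (take k w))"

definition bounded_words :: "nat \<Rightarrow> nat \<Rightarrow> nat \<Rightarrow> bool list set" where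
  "bounded_words d a b = {w. ups w = a \<and> downs w = b \<and> stays_above (- int d) w}"

lemma length_eq_ups_downs: "length w = ups w + downs w"
  by (induction w) (auto simp: ups_def downs_def)

lemma height_eq_ups_downs: "height w = int (ups w) - int (downs w)"
  by (simp add: height_def ups_def downs_def)

lemma ups_snoc [simp]: "ups (w @ [x]) = ups w + (if x then 0 else 1)"
  by (simp add: ups_def)

lemma downs_snoc [simp]: "downs (w @ [x]) = downs w + (if x then 1 else 0)"
  by (simp add: downs_def)

lemma height_Nil [simp]: "height [] = 0"
  by (simp add: height_def)

lemma height_Cons: "height (x # w) = height w + (if x then -1 else 1)"
  by (simp add: height_def)

lemma stays_above_height: "stays_above L w \<Longrightarrow> L \<le> height w"
  unfolding stays_above_def by (metis order_refl take_all)

lemma stays_above_snoc: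
  "stays_above L (w @ [x]) \<longleftrightarrow> stays_above L w \<and> L \<le> height (w @ [x])"
  unfolding stays_above_def by (auto simp: le_Suc_eq)

lemma stays_above_Cons_up:
  assumes "L \<le> 0"
  shows "stays_above L (False # w) \<longleftrightarrow> stays_above (L - 1) w"
  unfolding stays_above_def using assms
  by (simp add: less_Suc_eq_le[symmetric] All_less_Suc2 height_Cons diff_le_eq add.commute)

lemma snoc_down_in_bounded_words:
  "w @ [True] \<in> bounded_words d a b \<longleftrightarrow> 1 \<le> b \<and> b \<le> a + d \<and> w \<in> bounded_words d a (b - 1)"
  by (auto simp: bounded_words_def stays_above_snoc height_eq_ups_downs)

lemma snoc_up_in_bounded_words:
  "w @ [False] \<in> bounded_words d a b \<longleftrightarrow> 1 \<le> a \<and> w \<in> bounded_words d (a - 1) b"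
  by (auto simp: bounded_words_def stays_above_snoc height_eq_ups_downs dest: stays_above_height)

lemma Nil_in_bounded_words: "[] \<in> bounded_words d a b \<longleftrightarrow> a = 0 \<and> b = 0"
  by (simp add: bounded_words_def stays_above_def ups_def downs_def)

lemma bounded_words_eq_empty: "a + d < b \<Longrightarrow> bounded_words d a b = {}"
  unfolding bounded_words_def by (auto dest!: stays_above_height simp: height_eq_ups_downs)

lemma finite_bounded_words: "finite (bounded_words d a b)"
proof (rule finite_subset)
  show "bounded_words d a b \<subseteq> {w. set w \<subseteq> UNIV \<and> length w = a + b}"
    unfolding bounded_words_def by (auto simp: length_eq_ups_downs)
qed (rule finite_lists_length_eq, simp)

lemma descents_subset: "descents w \<subseteq> {..<length w}"
  unfolding descents_def by auto

lemma descents_snoc: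
  "descents (w @ [x]) = descents w \<union> (if \<not> x \<and> w \<noteq> [] \<and> last w then {length w} else {})"
proof (rule set_eqI)
  fix i
  consider "i < length w" | "i = length w" | "length w < i"
    by linarith
  then show "i \<in> descents (w @ [x])
      \<longleftrightarrow> i \<in> descents w \<union> (if \<not> x \<and> w \<noteq> [] \<and> last w then {length w} else {})"
  proof cases
    case 2
    then show ?thesis by (cases w rule: rev_cases) (auto simp: descents_def nth_append)
  qed (auto simp: descents_def nth_append)
qed

lemma maj_snoc: "maj (w @ [x]) = maj w + (if \<not> x \<and> w \<noteq> [] \<and> last w then length w else 0)"
proof -
  have "finite (descents w)" "length w \<notin> descents w"
    using descents_subset[of w] finite_subset by auto
  then show ?thesis unfolding maj_def descents_snoc by auto
qed

section \<open>The major index generating function of bounded words\<close>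

definition maj_gf :: "nat \<Rightarrow> nat \<Rightarrow> nat \<Rightarrow> 'a::field \<Rightarrow> 'a" where
  "maj_gf d a b q = (\<Sum>w\<in>bounded_words d a b. q ^ maj w)"

definition maj_gf_last :: "bool \<Rightarrow> nat \<Rightarrow> nat \<Rightarrow> nat \<Rightarrow> 'a::field \<Rightarrow> 'a" where
  "maj_gf_last x d a b q = (\<Sum>w\<in>{w\<in>bounded_words d a b. w \<noteq> [] \<and> last w = x}. q ^ maj w)"

lemma sum_last_eq_sum_snoc:
  "(\<Sum>w\<in>{w\<in>A. w \<noteq> [] \<and> last w = x}. f w) = (\<Sum>u\<in>{u. u @ [x] \<in> A}. f (u @ [x]))"
proof -
  have "{w\<in>A. w \<noteq> [] \<and> last w = x} = (\<lambda>u. u @ [x]) ` {u. u @ [x] \<in> A}"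
    by (auto simp: image_iff) (metis append_butlast_last_id)
  then show ?thesis by (simp add: sum.reindex inj_on_def)
qed

lemma maj_gf_split:
  "maj_gf d a b q = maj_gf_last False d a b q + maj_gf_last True d a b q + (if a = 0 \<and> b = 0 then 1 else 0)"
proof -
  let ?W = "bounded_words d a b"
  let ?L = "\<lambda>x. {w\<in>?W. w \<noteq> [] \<and> last w = x}"
  have W: "?W = (?L False \<union> ?L True) \<union> (if a = 0 \<and> b = 0 then {[]} else {})"
    using Nil_in_bounded_words by auto
  have "maj_gf d a b q = (\<Sum>w\<in>?L False. q ^ maj w) + (\<Sum>w\<in>?L True. q ^ maj w)
      + (\<Sum>w\<in>(if a = 0 \<and> b = 0 then {[]} else {}). q ^ maj w)"
    unfolding maj_gf_def using finite_bounded_words[of d a b]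
    by (subst W, subst sum.union_disjoint, auto intro: sum.union_disjoint)
  then show ?thesis
    by (simp add: maj_gf_last_def maj_def descents_def)
qed

lemma maj_gf_last_down:
  "maj_gf_last True d a b q = (if 1 \<le> b \<and> b \<le> a + d then maj_gf d a (b - 1) q else 0)"
proof -
  have "{u. u @ [True] \<in> bounded_words d a b} = (if 1 \<le> b \<and> b \<le> a + d then bounded_words d a (b - 1) else {})"
    using snoc_down_in_bounded_words by auto
  then show ?thesis
    unfolding maj_gf_last_def sum_last_eq_sum_snoc by (simp add: maj_gf_def maj_snoc)
qed

lemma maj_gf_last_up:
  "maj_gf_last False d a b q =
    (if 1 \<le> a then maj_gf d (a - 1) b q + (q ^ (a - 1 + b) - 1) * maj_gf_last True d (a - 1) b q else 0)"
proof -
  have "maj_gf_last False d a b q = (\<Sum>u\<in>{u. u @ [False] \<in> bounded_words d a b}. q ^ maj (u @ [False]))"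
    unfolding maj_gf_last_def sum_last_eq_sum_snoc ..
  also have "{u. u @ [False] \<in> bounded_words d a b} = (if 1 \<le> a then bounded_words d (a - 1) b else {})"
    using snoc_up_in_bounded_words by auto
  finally have up: "maj_gf_last False d a b q = (if 1 \<le> a then \<Sum>u\<in>bounded_words d (a - 1) b. q ^ maj (u @ [False]) else 0)"
    by simp
  have "(\<Sum>u\<in>bounded_words d a' b. q ^ maj (u @ [False]))
      = maj_gf d a' b q + (q ^ (a' + b) - 1) * maj_gf_last True d a' b q" for a'
  proof -
    have "(\<Sum>u\<in>bounded_words d a' b. q ^ maj (u @ [False]))
        = (\<Sum>u\<in>bounded_words d a' b. q ^ maj u + (q ^ (a' + b) - 1) * (if u \<noteq> [] \<and> last u then q ^ maj u else 0))"
      by (intro sum.cong) (auto simp: maj_snoc bounded_words_def length_eq_ups_downs power_add algebra_simps)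
    then show ?thesis
      unfolding maj_gf_def maj_gf_last_def sum.distrib sum_distrib_left[symmetric]
      by (simp add: sum.inter_filter[OF finite_bounded_words])
  qed
  then show ?thesis using up by simp
qed

lemma maj_gf_0_right [simp]: "maj_gf d a 0 q = 1"
proof (induction a)
  case (Suc a)
  then show ?case using maj_gf_split[of d "Suc a" 0 q] by (simp add: maj_gf_last_up maj_gf_last_down)
qed (simp add: maj_gf_split[of d 0 0] maj_gf_last_up maj_gf_last_down)

lemma maj_gf_0_left: "maj_gf d 0 b q = (if b \<le> d then 1 else 0)"
proof (induction b)
  case (Suc b)
  then show ?case using maj_gf_split[of d 0 "Suc b" q] by (simp add: maj_gf_last_up maj_gf_last_down)
qed simp

lemma maj_gf_Suc_Suc:
  assumes "b \<le> a + d"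
  shows "maj_gf d (Suc a) (Suc b) q = maj_gf d a (Suc b) q + maj_gf d (Suc a) b q
           + (if b < a + d then (q ^ (Suc a + b) - 1) * maj_gf d a b q else 0)"
  using assms maj_gf_split[of d "Suc a" "Suc b" q] by (simp add: maj_gf_last_up maj_gf_last_down)

lemma maj_gf_eq_qbin_sub_reflected:
  "b \<le> a + d \<Longrightarrow> maj_gf d a b q = qbin a b q - q ^ (d + 1) * qbin_reflected d a b q"
proof (induction "a + b" arbitrary: a b rule: less_induct)
  case less
  show ?case
  proof (cases a)
    case 0
    then show ?thesis using less.prems by (simp add: maj_gf_0_left qbin_reflected_def)
  next
    case a: (Suc a')
    show ?thesis
    proof (cases b)
      case 0
      then show ?thesis by (simp add: qbin_reflected_def)
    next
      case b: (Suc b')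
      let ?R = "\<lambda>a b. qbin a b q - q ^ (d + 1) * qbin_reflected d a b q"
      have ih: "maj_gf d a b' q = ?R a b'"
        using less b by simp
      show ?thesis
      proof (cases "b' < a' + d")
        case True
        have G: "qbin a b q = qbin a' b q + qbin a b' q + (q ^ (a + b') - 1) * qbin a' b' q"
          using qbin_Suc_Suc_second_difference[of a' b' q] unfolding a b by (simp add: algebra_simps)
        have H: "qbin_reflected d a b q = qbin_reflected d a' b q + qbin_reflected d a b' q
            + (q ^ (a + b') - 1) * qbin_reflected d a' b' q"
          using qbin_reflected_second_difference[of d a' b' q] unfolding a b by (simp add: algebra_simps)
        have "maj_gf d a b q = ?R a' b + ?R a b' + (q ^ (a + b') - 1) * ?R a' b'"
          using maj_gf_Suc_Suc[of b' a' d q] less a b True ih by simp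
        then show ?thesis unfolding G H by (simp add: algebra_simps)
      next
        case False
        then have "b' = a' + d" "maj_gf d a' b q = 0"
          using less.prems a b by (simp_all add: maj_gf_def bounded_words_eq_empty)
        then show ?thesis
          using maj_gf_Suc_Suc[of b' a' d q] ih qbin_sub_reflected_boundary[of b' a' d q]
          unfolding a b by simp
      qed
    qed
  qed
qed

section \<open>Ballot paths\<close>

lemma descents_Cons_up: "descents (False # w) = Suc ` descents w"
proof (intro set_eqI iffI)
  fix i assume "i \<in> descents (False # w)"
  then show "i \<in> Suc ` descents w"
    unfolding descents_def by (cases i; cases "i - 1") (auto simp: image_iff)
qed (auto simp: descents_def)

lemma maj_minus_des_Cons_up: "maj (False # w) - des (False # w) = maj w"
proof -
  have "finite (descents w)"
    using descents_subset[of w] finite_subset by auto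
  then have "maj (False # w) = maj w + des w"
    unfolding maj_def des_def descents_Cons_up using sum_Suc[of id "descents w"] by (simp add: sum.reindex)
  moreover have "des (False # w) = des w"
    unfolding des_def descents_Cons_up by (simp add: card_image)
  ultimately show ?thesis by simp
qed

lemma Bpaths_eq_image:
  assumes "1 \<le> r" and "r \<le> n"
  shows "Bpaths n r = (\<lambda>w. False # w) ` bounded_words (2 * r - 1) (n - r) (n + r - 1)"
proof (intro set_eqI iffI)
  fix p assume "p \<in> Bpaths n r"
  then obtain w where p: "p = False # w" and "length w = 2 * n - 1" "height w = 1 - 2 * int r"
    and "stays_above (1 - 2 * int r) w"
    using assms by (cases p) (auto simp: Bpaths_def stays_above_def[symmetric] height_Cons stays_above_Cons_up)
  then have "w \<in> bounded_words (2 * r - 1) (n - r) (n + r - 1)"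
    using assms by (auto simp: bounded_words_def length_eq_ups_downs height_eq_ups_downs of_nat_diff)
  then show "p \<in> (\<lambda>w. False # w) ` bounded_words (2 * r - 1) (n - r) (n + r - 1)"
    using p by blast
next
  fix p assume "p \<in> (\<lambda>w. False # w) ` bounded_words (2 * r - 1) (n - r) (n + r - 1)"
  then obtain w where p: "p = False # w" and w: "w \<in> bounded_words (2 * r - 1) (n - r) (n + r - 1)"
    by blast
  then have "length w = 2 * n - 1" "height w = 1 - 2 * int r" "stays_above (1 - 2 * int r) w"
    using assms by (auto simp: bounded_words_def length_eq_ups_downs height_eq_ups_downs of_nat_diff)
  then show "p \<in> Bpaths n r"
    using assms p by (auto simp: Bpaths_def stays_above_def[symmetric] height_Cons stays_above_Cons_up)
qed

lemma sum_Bpaths_eq_maj_gf: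
  assumes "1 \<le> r" and "r \<le> n"
  shows "(\<Sum>p\<in>Bpaths n r. q ^ (maj p - des p)) = maj_gf (2 * r - 1) (n - r) (n + r - 1) q"
  unfolding Bpaths_eq_image[OF assms] maj_gf_def
  by (simp add: sum.reindex maj_minus_des_Cons_up)

lemma sum_Bpaths_eq_qbin_sub_qbin:
  assumes "1 \<le> r" and "r < n"
  shows "(\<Sum>p\<in>Bpaths n r. q ^ (maj p - des p))
       = qbin (n - r) (n + r - 1) q - q ^ (2 * r) * qbin (n - r - 1) (n + r) q"
proof -
  have "qbin_reflected (2 * r - 1) (n - r) (n + r - 1) q = qbin (n - r - 1) (n + r) q"
    using assms by (simp add: qbin_reflected_def add.commute)
  then show ?thesis
    using assms maj_gf_eq_qbin_sub_reflected[of "n + r - 1" "n - r" "2 * r - 1" q]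
    by (simp add: sum_Bpaths_eq_maj_gf)
qed

section \<open>Closed forms\<close>

lemma Bq_diag:
  assumes "1 \<le> n" and "qfact (2 * n) q \<noteq> 0"
  shows "Bq n n q = 1"
proof -
  have "qfact (2 * n) q = qfact (2 * n - 1) q * qint (2 * n) q"
    using assms(1) qfact_Suc[of "2 * n - 1" q] by simp
  then show ?thesis
    using assms(2) by (simp add: Bq_def mult_2 qfact_def[of 0])
qed

lemma Bq_eq_qbin_sub_qbin:
  assumes "r < n" and "qfact (n + r) q \<noteq> 0" and "qfact (n - r) q \<noteq> 0"
  shows "Bq n r q = qbin (n - r) (n + r - 1) q - q ^ (2 * r) * qbin (n - r - 1) (n + r) q"
    and "q \<noteq> 0 \<Longrightarrow> Bq n r q = inverse q ^ (n - r) * (qbin (n - r) (n + r - 1) q - qbin (n - r - 1) (n + r) q)"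
proof -
  obtain a where a: "n - r = Suc a"
    using assms(1) by (cases "n - r") auto
  obtain b where b: "n + r = Suc b"
    using assms(1) by (cases "n + r") auto
  have "2 * n - 1 = Suc (a + b)"
    using a b by simp
  then have diff: "qbin (n - r) (n + r - 1) q - q ^ k * qbin (n - r - 1) (n + r) q
      = qfact (2 * n - 1) q * (qint (n + r) q - q ^ k * qint (n - r) q) / (qfact (n + r) q * qfact (n - r) q)" for k
    using qbin_sub_qbin_qfact[of a q b k] assms(2,3) unfolding a b by (simp add: mult.commute)
  have split1: "n + r = 2 * r + (n - r)" and split2: "n + r = (n - r) + 2 * r"
    using assms(1) by simp_all
  have "qint (n + r) q - q ^ (2 * r) * qint (n - r) q = qint (2 * r) q"
    unfolding split1 qint_add by simp
  moreover have "qint (n + r) q - qint (n - r) q = q ^ (n - r) * qint (2 * r) q"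
    unfolding split2 qint_add by simp
  ultimately have "qbin (n - r) (n + r - 1) q - q ^ (2 * r) * qbin (n - r - 1) (n + r) q = Bq n r q"
    "qbin (n - r) (n + r - 1) q - qbin (n - r - 1) (n + r) q = q ^ (n - r) * Bq n r q"
    using diff[of "2 * r"] diff[of 0] by (simp_all add: Bq_def)
  then show "Bq n r q = qbin (n - r) (n + r - 1) q - q ^ (2 * r) * qbin (n - r - 1) (n + r) q"
    and "q \<noteq> 0 \<Longrightarrow> Bq n r q = inverse q ^ (n - r) * (qbin (n - r) (n + r - 1) q - qbin (n - r - 1) (n + r) q)"
    by (simp_all add: power_inverse)
qed

theorem theorem1:
  fixes q :: "'a::field" and n r :: nat
  assumes "1 \<le> r" and "r \<le> n"
    and "q \<noteq> 0" and "qfact (n + r) q \<noteq> 0" and "qfact (n - r) q \<noteq> 0"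
  shows "Bq n r q = (\<Sum>p\<in>Bpaths n r. q ^ (maj p - des p))
       \<and> Bq n r q = inverse q ^ (n - r) * (gbin (2*n - 1) (n + r - 1) q - gbin (2*n - 1) (n + r) q)"
proof (cases "r = n")
  case True
  then have "(\<Sum>p\<in>Bpaths n r. q ^ (maj p - des p)) = 1"
    using assms(1) by (simp add: sum_Bpaths_eq_maj_gf maj_gf_0_left)
  moreover have "Bq n r q = 1"
    using True assms(1,4) Bq_diag[of n q] by (simp add: mult_2)
  moreover have "gbin (2 * n - 1) (n + r) q = 0"
    using True assms(1) by (simp add: gbin_eq_0)
  ultimately show ?thesis
    using True by (simp add: mult_2)
next
  case False
  with assms(2) have "r < n" by simp
  have "gbin (2 * n - 1) (n + r - 1) q = qbin (n + r - 1) (n - r) q"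
    and "gbin (2 * n - 1) (n + r) q = qbin (n + r) (n - r - 1) q"
    using assms(1) \<open>r < n\<close> by (simp_all add: qbin_def mult_2)
  then show ?thesis
    using sum_Bpaths_eq_qbin_sub_qbin[OF assms(1) \<open>r < n\<close>] Bq_eq_qbin_sub_qbin[OF \<open>r < n\<close> assms(4,5)]
      assms(3) qbin_commute by metis
qed

end
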